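(* Let $\mathcal G$ be the graph defined below. There is no mixed $1$-stack $1$-queue layout $(<,\{S,Q\})$ of $\mathcal G$ for which there exist an edge $(v_1,v_2)\in Q$ and three distinct pairs of twins $s_i,t_i$ ($1\le i\le 3$) with $v_1<s_i<v_2$ and $v_1<t_i<v_2$ for all $1\le i\le 3$.
   Context: Graph $\mathcal G$: take two vertices $A,B$ and $19$ copies of a gadget $H$, identified at $A$ and $B$. Each copy of $H$ consists of two further vertices $s,t$ (called twins) joined by the twin edge $(s,t)$, the edges $(A,s),(A,t),(B,s),(B,t)$, and seven further vertices (called connectors), each of degree $2$ and adjacent to exactly $s$ and $t$. ($A$ and $B$ are not adjacent.) For a vertex ordering $<$ and an edge $e$, let $L(e)<R(e)$ be its endpoints; edges $e,f$ cross if $L(e)<L(f)<R(e)<R(f)$ and nest if $L(e)<L(f)<R(f)<R(e)$. A stack is an edge set with no two crossing edges, a queue an edge set with no two nested edges. A mixed $1$-stack $1$-queue layout is a vertex ordering $<$ together with a partition of the edge set into a stack $S$ and a queue $Q$. *)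

theory Defs
  imports Main
begin

text \<open>Vertices of the graph G: the two poles A, B; for each copy i < 19 of the
gadget H the twins s_i, t_i; and the connectors c_{i,j}, j < 7, of copy i.\<close>

datatype vtx = VA | VB | Tw_s nat | Tw_t nat | Conn nat nat

definition ncopies :: nat where "ncopies = 19"
definition nconn :: nat where "nconn = 7"

definition G_V :: "vtx set" where
  "G_V = {VA, VB} \<union> {Tw_s i | i. i < ncopies} \<union> {Tw_t i | i. i < ncopies}
         \<union> {Conn i j | i j. i < ncopies \<and> j < nconn}"

text \<open>Edges are unordered pairs, represented as two-element sets.\<close>
definition G_E :: "vtx set set" where
  "G_E = {{Tw_s i, Tw_t i} | i. i < ncopies}
       \<union> {{VA, Tw_s i} | i. i < ncopies} \<union> {{VA, Tw_t i} | i. i < ncopies}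
       \<union> {{VB, Tw_s i} | i. i < ncopies} \<union> {{VB, Tw_t i} | i. i < ncopies}
       \<union> {{Conn i j, Tw_s i} | i j. i < ncopies \<and> j < nconn}
       \<union> {{Conn i j, Tw_t i} | i j. i < ncopies \<and> j < nconn}"

text \<open>A vertex ordering of V is given by an injective position map pos on V:
u < v iff pos u < pos v.\<close>
definition vertex_ordering :: "('v \<Rightarrow> nat) \<Rightarrow> 'v set \<Rightarrow> bool" where
  "vertex_ordering pos V \<longleftrightarrow> inj_on pos V"

definition Lpos :: "('v \<Rightarrow> nat) \<Rightarrow> 'v set \<Rightarrow> nat" where
  "Lpos pos e = Min (pos ` e)"
definition Rpos :: "('v \<Rightarrow> nat) \<Rightarrow> 'v set \<Rightarrow> nat" where
  "Rpos pos e = Max (pos ` e)"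

definition crossing :: "('v \<Rightarrow> nat) \<Rightarrow> 'v set \<Rightarrow> 'v set \<Rightarrow> bool" where
  "crossing pos e f \<longleftrightarrow> Lpos pos e < Lpos pos f \<and> Lpos pos f < Rpos pos e \<and> Rpos pos e < Rpos pos f"
definition nesting :: "('v \<Rightarrow> nat) \<Rightarrow> 'v set \<Rightarrow> 'v set \<Rightarrow> bool" where
  "nesting pos e f \<longleftrightarrow> Lpos pos e < Lpos pos f \<and> Lpos pos f < Rpos pos f \<and> Rpos pos f < Rpos pos e"

definition is_stack :: "('v \<Rightarrow> nat) \<Rightarrow> 'v set set \<Rightarrow> bool" where
  "is_stack pos S \<longleftrightarrow> (\<forall>e\<in>S. \<forall>f\<in>S. \<not> crossing pos e f)"
definition is_queue :: "('v \<Rightarrow> nat) \<Rightarrow> 'v set set \<Rightarrow> bool" where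
  "is_queue pos Q \<longleftrightarrow> (\<forall>e\<in>Q. \<forall>f\<in>Q. \<not> nesting pos e f)"

definition mixed_layout :: "'v set \<Rightarrow> 'v set set \<Rightarrow> ('v \<Rightarrow> nat) \<Rightarrow> 'v set set \<Rightarrow> 'v set set \<Rightarrow> bool" where
  "mixed_layout V E pos S Q \<longleftrightarrow> vertex_ordering pos V \<and> S \<union> Q = E \<and> S \<inter> Q = {}
     \<and> is_stack pos S \<and> is_queue pos Q"

end

theory Submission
  imports Defs "HOL-Library.FuncSet"
begin

text \<open>Let e be the queue edge. An edge of G whose ends are both spanned by e must lie in the stack,
since otherwise it nests inside e. Each copy whose twins are spanned by e has seven connectors, each
spanned by e or lying to one side of e. Three spanned connectors would make the stack contain a K_{2,3}
with all vertices in one page, which is impossible; two connectors on the same side of e whose four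
edges all lie in the stack (or all in the queue) would cross (or nest). By pigeonhole, every such copy
therefore has a mixed connector outside e, one of whose edges is in the stack and the other in the queue.
Finally, mixed connectors of two different copies on the same side of e force a crossing or a nesting,
and among three copies two of the chosen mixed connectors lie on the same side.\<close>

lemma Lpos_doubleton [simp]: "Lpos pos {u, v} = min (pos u) (pos v)"
  by (simp add: Lpos_def)

lemma Rpos_doubleton [simp]: "Rpos pos {u, v} = max (pos u) (pos v)"
  by (simp add: Rpos_def)

definition spans :: "('v \<Rightarrow> nat) \<Rightarrow> 'v set \<Rightarrow> 'v \<Rightarrow> bool" where
  "spans pos e x \<longleftrightarrow> Lpos pos e < pos x \<and> pos x < Rpos pos e"

lemma spans_doubleton:
  "spans pos {u, v} x \<longleftrightarrow> pos u < pos x \<and> pos x < pos v \<or> pos v < pos x \<and> pos x < pos u"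
  by (auto simp: spans_def)

lemma spans_doubleton_notin: "spans pos {u, v} x \<Longrightarrow> x \<notin> {u, v}"
  by (auto simp: spans_doubleton)

definition separated :: "('v \<Rightarrow> nat) \<Rightarrow> 'v set \<Rightarrow> 'v set \<Rightarrow> bool" where
  "separated pos X Y \<longleftrightarrow> (\<forall>x\<in>X. \<forall>y\<in>Y. pos x < pos y) \<or> (\<forall>x\<in>X. \<forall>y\<in>Y. pos y < pos x)"

lemma separated_spanned:
  assumes "separated pos X {p, q}" "\<forall>y\<in>Y. spans pos {p, q} y"
  shows "separated pos X Y"
  using assms unfolding separated_def spans_doubleton by (meson insertCI order_less_trans)

lemma separated_pair_of_three:
  assumes "separated pos {x1} Y" "separated pos {x2} Y" "separated pos {x3} Y"
  shows "separated pos {x1, x2} Y \<or> separated pos {x1, x3} Y \<or> separated pos {x2, x3} Y"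
  using assms unfolding separated_def by auto

lemma is_stack_mono: "is_stack pos S \<Longrightarrow> T \<subseteq> S \<Longrightarrow> is_stack pos T"
  unfolding is_stack_def by blast

lemma is_queue_mono: "is_queue pos Q \<Longrightarrow> T \<subseteq> Q \<Longrightarrow> is_queue pos T"
  unfolding is_queue_def by blast

lemma stack_spans_iff:
  assumes "is_stack pos S" "{u, v} \<in> S" "{x, y} \<in> S" "distinct (map pos [u, v, x, y])"
  shows "spans pos {u, v} x \<longleftrightarrow> spans pos {u, v} y"
proof -
  have "\<not> crossing pos {u, v} {x, y}" "\<not> crossing pos {x, y} {u, v}"
    using assms(1-3) unfolding is_stack_def by blast+
  then show ?thesis
    using assms(4) unfolding crossing_def spans_def by (auto simp: min_def max_def split: if_splits)
qed

lemma queue_not_spans_both: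
  assumes "is_queue pos Q" "{u, v} \<in> Q" "{x, y} \<in> Q" "pos x \<noteq> pos y"
  shows "\<not> (spans pos {u, v} x \<and> spans pos {u, v} y)"
proof -
  have "\<not> nesting pos {u, v} {x, y}"
    using assms(1-3) unfolding is_queue_def by blast
  then show ?thesis
    using assms(4) unfolding nesting_def spans_def by (auto simp: min_def max_def split: if_splits)
qed

text \<open>The order configurations below are decided by verit over int, not over nat.\<close>

lemmas order_as_int = of_nat_less_iff[symmetric, where 'a = int] of_nat_eq_iff[symmetric, where 'a = int]

lemma K23_not_stack:
  assumes "distinct (map pos [a, b, c1, c2, c3])"
  shows "\<not> is_stack pos {{c1, a}, {c2, a}, {c3, a}, {c1, b}, {c2, b}, {c3, b}}"
proof
  assume S: "is_stack pos {{c1, a}, {c2, a}, {c3, a}, {c1, b}, {c2, b}, {c3, b}}"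
  have "spans pos {a, c1} b \<longleftrightarrow> spans pos {a, c1} c2" "spans pos {a, c1} b \<longleftrightarrow> spans pos {a, c1} c3"
    "spans pos {a, c2} b \<longleftrightarrow> spans pos {a, c2} c1" "spans pos {a, c2} b \<longleftrightarrow> spans pos {a, c2} c3"
    "spans pos {a, c3} b \<longleftrightarrow> spans pos {a, c3} c1" "spans pos {a, c3} b \<longleftrightarrow> spans pos {a, c3} c2"
    by (rule stack_spans_iff[OF S]; use assms in \<open>auto simp: insert_commute\<close>)+
  with assms show False
    unfolding spans_doubleton distinct.simps list.map list.set insert_iff empty_iff order_as_int
    by (smt (verit))
qed

lemma separated_C4_not_stack:
  assumes "distinct (map pos [a, b, c, d])" "separated pos {c, d} {a, b}"
  shows "\<not> is_stack pos {{c, a}, {c, b}, {d, a}, {d, b}}"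
proof
  assume S: "is_stack pos {{c, a}, {c, b}, {d, a}, {d, b}}"
  have "spans pos {c, a} d \<longleftrightarrow> spans pos {c, a} b" "spans pos {c, b} d \<longleftrightarrow> spans pos {c, b} a"
    by (rule stack_spans_iff[OF S]; use assms(1) in auto)+
  with assms show False
    unfolding spans_doubleton separated_def distinct.simps list.map list.set insert_iff empty_iff
      ball_simps order_as_int
    by (smt (verit))
qed

lemma separated_C4_not_queue:
  assumes "distinct (map pos [a, b, c, d])" "separated pos {c, d} {a, b}"
  shows "\<not> is_queue pos {{c, a}, {c, b}, {d, a}, {d, b}}"
proof
  assume Q: "is_queue pos {{c, a}, {c, b}, {d, a}, {d, b}}"
  have "\<not> (spans pos {c, a} d \<and> spans pos {c, a} b)" "\<not> (spans pos {c, b} d \<and> spans pos {c, b} a)"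
    "\<not> (spans pos {d, a} c \<and> spans pos {d, a} b)" "\<not> (spans pos {d, b} c \<and> spans pos {d, b} a)"
    by (rule queue_not_spans_both[OF Q]; use assms(1) in auto)+
  with assms show False
    unfolding spans_doubleton separated_def distinct.simps list.map list.set insert_iff empty_iff
      ball_simps order_as_int
    by (smt (verit))
qed

lemma separated_mixed_not_layout:
  assumes "distinct (map pos [m, m', a, b, a', b'])" "separated pos {m, m'} {a, b, a', b'}"
    and S: "is_stack pos {{a, b}, {a', b'}, {m, a}, {m', a'}}" and Q: "is_queue pos {{m, b}, {m', b'}}"
  shows False
proof -
  have "spans pos {a, b} a' \<longleftrightarrow> spans pos {a, b} b'" "spans pos {m, a} m' \<longleftrightarrow> spans pos {m, a} a'"
    "spans pos {m, a} a' \<longleftrightarrow> spans pos {m, a} b'" "spans pos {m', a'} a \<longleftrightarrow> spans pos {m', a'} b"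
    by (rule stack_spans_iff[OF S]; use assms(1) in auto)+
  moreover have "\<not> (spans pos {m, b} m' \<and> spans pos {m, b} b')" "\<not> (spans pos {m', b'} m \<and> spans pos {m', b'} b)"
    by (rule queue_not_spans_both[OF Q]; use assms(1) in auto)+
  ultimately show False using assms(1,2)
    unfolding spans_doubleton separated_def distinct.simps list.map list.set insert_iff empty_iff
      ball_simps order_as_int
    by (smt (verit))
qed

lemma pigeonhole_triple:
  assumes "finite A" "f \<in> A \<rightarrow> B" "finite B" "2 * card B < card A"
  obtains x y z where "{x, y, z} \<subseteq> A" "distinct [x, y, z]" "f y = f x" "f z = f x"
proof -
  have "B \<noteq> {}" using assms(2,4) by (metis all_not_in_conv card.empty funcset_mem not_less0)
  then obtain b where "b \<in> B" "card A \<le> card (f -` {b} \<inter> A) * card B"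
    using pigeonhole_card[OF assms(2,1,3)] by blast
  then have "2 * card B < card (f -` {b} \<inter> A) * card B"
    using assms(4) by linarith
  then have "Suc (Suc (Suc 0)) \<le> card (f -` {b} \<inter> A)"
    by simp
  then obtain x y z where "{x, y, z} \<subseteq> f -` {b} \<inter> A" "distinct [x, y, z]"
    unfolding card_le_Suc_iff by auto
  then show ?thesis using that by auto
qed

lemma G_E_twin: "i < ncopies \<Longrightarrow> {Tw_s i, Tw_t i} \<in> G_E"
  unfolding G_E_def by blast

lemma G_E_connector:
  assumes "i < ncopies" "j < nconn"
  shows "{Conn i j, Tw_s i} \<in> G_E" "{Conn i j, Tw_t i} \<in> G_E"
  using assms unfolding G_E_def by blast+

lemma G_V_copy:
  assumes "i < ncopies" "j < nconn"
  shows "Tw_s i \<in> G_V" "Tw_t i \<in> G_V" "Conn i j \<in> G_V"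
  using assms unfolding G_V_def by blast+

lemma G_E_doubleton:
  assumes "f \<in> G_E"
  obtains u v where "f = {u, v}" "u \<noteq> v" "u \<in> G_V" "v \<in> G_V"
  using assms unfolding G_E_def G_V_def by auto

lemma G_E_connector_twin: "f \<in> G_E \<Longrightarrow> Conn i j \<in> f \<Longrightarrow> Tw_s i \<in> f \<or> Tw_t i \<in> f"
  unfolding G_E_def by auto

definition mixed_connector :: "vtx set set \<Rightarrow> nat \<Rightarrow> nat \<Rightarrow> bool" where
  "mixed_connector S i j \<longleftrightarrow> ({Conn i j, Tw_s i} \<in> S) \<noteq> ({Conn i j, Tw_t i} \<in> S)"

context
  fixes pos :: "vtx \<Rightarrow> nat" and S Q :: "vtx set set" and p q :: vtx
  assumes layout: "mixed_layout G_V G_E pos S Q" and e_in_Q: "{p, q} \<in> Q"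
begin

lemma layout_stack: "is_stack pos S"
  and layout_queue: "is_queue pos Q"
  and layout_partition: "f \<in> G_E \<Longrightarrow> f \<notin> S \<longleftrightarrow> f \<in> Q"
  using layout unfolding mixed_layout_def by auto

lemma distinct_positions: "set xs \<subseteq> G_V \<Longrightarrow> distinct xs \<Longrightarrow> distinct (map pos xs)"
  using layout unfolding mixed_layout_def vertex_ordering_def by (metis distinct_map inj_on_subset)

lemma e_in_G_E: "{p, q} \<in> G_E"
  using e_in_Q layout unfolding mixed_layout_def by blast

lemma e_endpoints: "p \<noteq> q" "p \<in> G_V" "q \<in> G_V"
  using e_in_G_E by (auto elim!: G_E_doubleton simp: doubleton_eq_iff)

lemma spanned_edge_in_stack:
  assumes "{u, v} \<in> G_E" "spans pos {p, q} u" "spans pos {p, q} v"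
  shows "{u, v} \<in> S"
proof (rule ccontr)
  assume "{u, v} \<notin> S"
  then have "{u, v} \<in> Q" using layout_partition assms(1) by blast
  moreover have "pos u \<noteq> pos v"
    using assms(1) by (elim G_E_doubleton)
      (use distinct_positions[of "[u, v]"] in \<open>auto simp: doubleton_eq_iff\<close>)
  ultimately show False using queue_not_spans_both[OF layout_queue e_in_Q] assms(2,3) by blast
qed

lemma connector_spanned_or_separated:
  assumes "i < ncopies" "j < nconn" "spans pos {p, q} (Tw_s i)" "spans pos {p, q} (Tw_t i)"
  shows "spans pos {p, q} (Conn i j) \<or> separated pos {Conn i j} {p, q}"
proof -
  have "Conn i j \<notin> {p, q}"
  proof
    assume "Conn i j \<in> {p, q}"
    then have "Tw_s i \<in> {p, q} \<or> Tw_t i \<in> {p, q}"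
      by (rule G_E_connector_twin[OF e_in_G_E])
    then show False
      using spans_doubleton_notin[OF assms(3)] spans_doubleton_notin[OF assms(4)] by blast
  qed
  then have "distinct (map pos [Conn i j, p, q])"
    using G_V_copy(3)[OF assms(1,2)] e_endpoints by (intro distinct_positions) auto
  then show ?thesis unfolding spans_doubleton separated_def by auto
qed

lemma spanned_connectors_at_most_two:
  assumes "i < ncopies" "{j1, j2, j3} \<subseteq> {..<nconn}" "distinct [j1, j2, j3]"
    "spans pos {p, q} (Tw_s i)" "spans pos {p, q} (Tw_t i)"
    "\<forall>j\<in>{j1, j2, j3}. spans pos {p, q} (Conn i j)"
  shows False
proof -
  have "{Conn i j, Tw_s i} \<in> S \<and> {Conn i j, Tw_t i} \<in> S" if "j \<in> {j1, j2, j3}" for j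
  proof -
    have "j < nconn" "spans pos {p, q} (Conn i j)" using assms(2,6) that by auto
    then show ?thesis
      using spanned_edge_in_stack[OF G_E_connector(1)[OF assms(1)]]
        spanned_edge_in_stack[OF G_E_connector(2)[OF assms(1)]] assms(4,5) by blast
  qed
  then have "is_stack pos {{Conn i j1, Tw_s i}, {Conn i j2, Tw_s i}, {Conn i j3, Tw_s i},
      {Conn i j1, Tw_t i}, {Conn i j2, Tw_t i}, {Conn i j3, Tw_t i}}"
    by (intro is_stack_mono[OF layout_stack]) auto
  moreover have "distinct (map pos [Tw_s i, Tw_t i, Conn i j1, Conn i j2, Conn i j3])"
    using assms(1-3) by (intro distinct_positions) (auto simp: G_V_copy)
  ultimately show False by (blast dest: K23_not_stack)
qed

lemma separated_pure_connectors:
  assumes "i < ncopies" "j < nconn" "j' < nconn" "j \<noteq> j'"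
    "spans pos {p, q} (Tw_s i)" "spans pos {p, q} (Tw_t i)"
    "separated pos {Conn i j, Conn i j'} {p, q}"
    "\<not> mixed_connector S i j" "\<not> mixed_connector S i j'"
    "({Conn i j, Tw_s i} \<in> S) = ({Conn i j', Tw_s i} \<in> S)"
  shows False
proof -
  let ?E = "{{Conn i j, Tw_s i}, {Conn i j, Tw_t i}, {Conn i j', Tw_s i}, {Conn i j', Tw_t i}}"
  have dist: "distinct (map pos [Tw_s i, Tw_t i, Conn i j, Conn i j'])"
    using assms(1-4) by (intro distinct_positions) (auto simp: G_V_copy)
  have sep: "separated pos {Conn i j, Conn i j'} {Tw_s i, Tw_t i}"
    using assms(5,6) by (intro separated_spanned[OF assms(7)]) simp
  have E: "?E \<subseteq> G_E" using G_E_connector assms(1-3) by simp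
  have same: "(f \<in> S) = ({Conn i j, Tw_s i} \<in> S)" if "f \<in> ?E" for f
    using that assms(8-10) unfolding mixed_connector_def by auto
  show False
  proof (cases "{Conn i j, Tw_s i} \<in> S")
    case True
    then have "is_stack pos ?E" using same by (intro is_stack_mono[OF layout_stack]) blast
    then show False using separated_C4_not_stack[OF dist sep] by contradiction
  next
    case False
    then have "?E \<subseteq> Q" using same E layout_partition by blast
    then have "is_queue pos ?E" by (rule is_queue_mono[OF layout_queue])
    then show False using separated_C4_not_queue[OF dist sep] by contradiction
  qed
qed

lemma mixed_connectorE:
  assumes "mixed_connector S i j" "i < ncopies" "j < nconn"
  obtains a b where "{a, b} = {Tw_s i, Tw_t i}" "{Conn i j, a} \<in> S" "{Conn i j, b} \<in> Q"
proof (cases "{Conn i j, Tw_s i} \<in> S")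
  case True
  then have "{Conn i j, Tw_t i} \<in> Q"
    using assms layout_partition G_E_connector unfolding mixed_connector_def by blast
  then show ?thesis using that True by blast
next
  case False
  then have "{Conn i j, Tw_s i} \<in> Q" "{Conn i j, Tw_t i} \<in> S"
    using assms layout_partition G_E_connector unfolding mixed_connector_def by blast+
  then show ?thesis using that[of "Tw_t i" "Tw_s i"] by (simp add: insert_commute)
qed

lemma separated_mixed_connectors:
  assumes "i < ncopies" "k < ncopies" "i \<noteq> k" "j < nconn" "j' < nconn"
    "spans pos {p, q} (Tw_s i)" "spans pos {p, q} (Tw_t i)"
    "spans pos {p, q} (Tw_s k)" "spans pos {p, q} (Tw_t k)"
    "mixed_connector S i j" "mixed_connector S k j'"
    "separated pos {Conn i j, Conn k j'} {p, q}"
  shows False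
proof -
  obtain a b where ab: "{a, b} = {Tw_s i, Tw_t i}" "{Conn i j, a} \<in> S" "{Conn i j, b} \<in> Q"
    using mixed_connectorE[OF assms(10,1,4)] .
  obtain a' b' where ab': "{a', b'} = {Tw_s k, Tw_t k}" "{Conn k j', a'} \<in> S" "{Conn k j', b'} \<in> Q"
    using mixed_connectorE[OF assms(11,2,5)] .
  have twins: "{a, b} \<in> S" "{a', b'} \<in> S"
    using spanned_edge_in_stack G_E_twin assms(1,2,6-9) ab(1) ab'(1) by (metis insertCI)+
  have "distinct (map pos [Conn i j, Conn k j', a, b, a', b'])"
    using assms(1-5) ab(1) ab'(1) by (intro distinct_positions) (auto simp: G_V_copy doubleton_eq_iff)
  moreover have "separated pos {Conn i j, Conn k j'} {a, b, a', b'}"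
    using assms(6-9) ab(1) ab'(1) by (intro separated_spanned[OF assms(12)]) (auto simp: doubleton_eq_iff)
  moreover have "is_stack pos {{a, b}, {a', b'}, {Conn i j, a}, {Conn k j', a'}}"
    using twins ab(2) ab'(2) by (intro is_stack_mono[OF layout_stack]) simp
  moreover have "is_queue pos {{Conn i j, b}, {Conn k j', b'}}"
    using ab(3) ab'(3) by (intro is_queue_mono[OF layout_queue]) simp
  ultimately show False by (rule separated_mixed_not_layout)
qed

lemma exists_separated_mixed_connector:
  assumes "i < ncopies" "spans pos {p, q} (Tw_s i)" "spans pos {p, q} (Tw_t i)"
  shows "\<exists>j<nconn. mixed_connector S i j \<and> separated pos {Conn i j} {p, q}"
proof (rule ccontr)
  assume no_mixed: "\<not> ?thesis"
  define side where "side j = (if spans pos {p, q} (Conn i j) then None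
    else Some (pos (Conn i j) < pos p))" for j
  have side_range: "side \<in> {..<nconn} \<rightarrow> {None, Some True, Some False}"
    by (auto simp: side_def)
  have "2 * card {None, Some True, Some False} < card {..<nconn}"
    by (simp add: nconn_def)
  then obtain j1 j2 j3 where js: "{j1, j2, j3} \<subseteq> {..<nconn}" "distinct [j1, j2, j3]"
    and same_side: "side j2 = side j1" "side j3 = side j1"
    by (elim pigeonhole_triple[OF finite_lessThan side_range, rotated]) auto
  show False
  proof (cases "side j1")
    case None
    then have "\<forall>j\<in>{j1, j2, j3}. spans pos {p, q} (Conn i j)"
      using same_side by (auto simp: side_def split: if_splits)
    then show False using spanned_connectors_at_most_two assms js by blast
  next
    case (Some left)
    have outside: "separated pos {Conn i j} {p, q}" "\<not> mixed_connector S i j"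
      "pos (Conn i j) < pos p \<longleftrightarrow> left" if "j \<in> {j1, j2, j3}" for j
    proof -
      have "side j = Some left" using Some same_side that by auto
      then have "\<not> spans pos {p, q} (Conn i j)" "pos (Conn i j) < pos p \<longleftrightarrow> left"
        by (auto simp: side_def split: if_splits)
      moreover have "j < nconn" using js that by auto
      ultimately show "separated pos {Conn i j} {p, q}" "pos (Conn i j) < pos p \<longleftrightarrow> left"
        using connector_spanned_or_separated assms by blast+
      then show "\<not> mixed_connector S i j" using no_mixed \<open>j < nconn\<close> by blast
    qed
    have pair: "separated pos {Conn i j, Conn i j'} {p, q}"
      if "j \<in> {j1, j2, j3}" "j' \<in> {j1, j2, j3}" for j j'
      using outside[OF that(1)] outside[OF that(2)] unfolding separated_def by auto
    obtain j j' where "j \<noteq> j'" "j \<in> {j1, j2, j3}" "j' \<in> {j1, j2, j3}"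
      "({Conn i j, Tw_s i} \<in> S) = ({Conn i j', Tw_s i} \<in> S)"
      using js(2) by (metis distinct_length_2_or_more insertCI)
    then show False
      using separated_pure_connectors[OF assms(1) _ _ _ assms(2,3) pair] outside(2) js(1) by blast
  qed
qed

lemma three_spanned_copies_impossible:
  assumes "{i1, i2, i3} \<subseteq> {..<ncopies}" "distinct [i1, i2, i3]"
    "\<forall>i\<in>{i1, i2, i3}. spans pos {p, q} (Tw_s i) \<and> spans pos {p, q} (Tw_t i)"
  shows False
proof -
  have "\<forall>i\<in>{i1, i2, i3}. \<exists>j<nconn. mixed_connector S i j \<and> separated pos {Conn i j} {p, q}"
    using exists_separated_mixed_connector assms(1,3) by blast
  then obtain J where J: "\<forall>i\<in>{i1, i2, i3}. J i < nconn \<and> mixed_connector S i (J i)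
      \<and> separated pos {Conn i (J i)} {p, q}"
    by metis
  have clash: False
    if "i \<in> {i1, i2, i3}" "k \<in> {i1, i2, i3}" "i \<noteq> k"
      "separated pos {Conn i (J i), Conn k (J k)} {p, q}" for i k
    using separated_mixed_connectors[of i k "J i" "J k"] J assms(1,3) that by blast
  show False
    using separated_pair_of_three[of pos "Conn i1 (J i1)" "{p, q}" "Conn i2 (J i2)" "Conn i3 (J i3)"]
      J clash assms(2) by auto
qed

end

lemma queue_edge_spans_no_three_copies:
  assumes layout: "mixed_layout G_V G_E pos S Q" and "e \<in> Q"
    and "{i1, i2, i3} \<subseteq> {..<ncopies}" "distinct [i1, i2, i3]"
    and "\<forall>i\<in>{i1, i2, i3}. spans pos e (Tw_s i) \<and> spans pos e (Tw_t i)"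
  shows False
proof -
  have "e \<in> G_E"
    using \<open>e \<in> Q\<close> layout unfolding mixed_layout_def by blast
  then obtain p q where "e = {p, q}"
    by (elim G_E_doubleton)
  with assms show False by (blast intro: three_spanned_copies_impossible)
qed

theorem lemma3:
  "\<not> (\<exists>pos S Q. mixed_layout G_V G_E pos S Q \<and>
        (\<exists>e\<in>Q. \<exists>i1 i2 i3. i1 < ncopies \<and> i2 < ncopies \<and> i3 < ncopies \<and>
            i1 \<noteq> i2 \<and> i1 \<noteq> i3 \<and> i2 \<noteq> i3 \<and>
            (\<forall>i\<in>{i1, i2, i3}.
               Lpos pos e < pos (Tw_s i) \<and> pos (Tw_s i) < Rpos pos e \<and>
               Lpos pos e < pos (Tw_t i) \<and> pos (Tw_t i) < Rpos pos e)))"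
  by (intro notI, elim exE conjE bexE, erule (1) queue_edge_spans_no_three_copies)
    (auto simp: spans_def)

end
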